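(* Let $\Gamma$ be a Shilla distance-regular graph with $b(\Gamma)=b$ and smallest eigenvalue $\theta_3$. Then $-b^2<\theta_3<-b$.
   Context: A connected graph $\Gamma$ of diameter $D$ is distance-regular if there are integers $b_i,c_i$ ($0\le i\le D$) such that for any two vertices $x,y$ at distance $i$, exactly $c_i$ neighbours of $y$ are at distance $i-1$ from $x$ and exactly $b_i$ neighbours of $y$ are at distance $i+1$ from $x$. Then $\Gamma$ is regular of valency $k=b_0$, and $a_i:=k-b_i-c_i$. Its eigenvalues (of the adjacency matrix) are $k=\theta_0>\theta_1>\dots>\theta_D$. A Shilla distance-regular graph is a distance-regular graph of diameter $3$ whose second largest eigenvalue satisfies $\theta_1=a_3$; for such graphs $k=(a_3-a_1)a_3$ and $b(\Gamma):=a_3-a_1=k/a_3$. *)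

theory Defs
  imports Complex_Main
begin

definition simple_graph :: "'a set \<Rightarrow> ('a \<Rightarrow> 'a \<Rightarrow> bool) \<Rightarrow> bool" where
  "simple_graph V E \<longleftrightarrow> finite V \<and> V \<noteq> {} \<and>
     (\<forall>x y. E x y \<longrightarrow> x \<in> V \<and> y \<in> V) \<and>
     (\<forall>x y. E x y \<longrightarrow> E y x) \<and> (\<forall>x. \<not> E x x)"

fun reach :: "('a \<Rightarrow> 'a \<Rightarrow> bool) \<Rightarrow> nat \<Rightarrow> 'a \<Rightarrow> 'a \<Rightarrow> bool" where
  "reach E 0 x y = (x = y)"
| "reach E (Suc n) x y = (\<exists>z. E x z \<and> reach E n z y)"

definition gdist :: "('a \<Rightarrow> 'a \<Rightarrow> bool) \<Rightarrow> 'a \<Rightarrow> 'a \<Rightarrow> nat" where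
  "gdist E x y = (LEAST n. reach E n x y)"

definition connected_graph :: "'a set \<Rightarrow> ('a \<Rightarrow> 'a \<Rightarrow> bool) \<Rightarrow> bool" where
  "connected_graph V E \<longleftrightarrow> (\<forall>x\<in>V. \<forall>y\<in>V. \<exists>n. reach E n x y)"

definition diameter :: "'a set \<Rightarrow> ('a \<Rightarrow> 'a \<Rightarrow> bool) \<Rightarrow> nat" where
  "diameter V E = Max {gdist E x y | x y. x \<in> V \<and> y \<in> V}"

definition distance_regular ::
  "'a set \<Rightarrow> ('a \<Rightarrow> 'a \<Rightarrow> bool) \<Rightarrow> nat \<Rightarrow> (nat \<Rightarrow> nat) \<Rightarrow> (nat \<Rightarrow> nat) \<Rightarrow> bool" where
  "distance_regular V E D b c \<longleftrightarrow>
     simple_graph V E \<and> connected_graph V E \<and> diameter V E = D \<and>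
     (\<forall>i\<le>D. \<forall>x\<in>V. \<forall>y\<in>V. gdist E x y = i \<longrightarrow>
        card {z. E y z \<and> gdist E x z + 1 = i} = c i \<and>
        card {z. E y z \<and> gdist E x z = i + 1} = b i)"

definition intersection_a :: "(nat \<Rightarrow> nat) \<Rightarrow> (nat \<Rightarrow> nat) \<Rightarrow> nat \<Rightarrow> int" where
  "intersection_a b c i = int (b 0) - int (b i) - int (c i)"

definition adj_eigenvalue :: "'a set \<Rightarrow> ('a \<Rightarrow> 'a \<Rightarrow> bool) \<Rightarrow> real \<Rightarrow> bool" where
  "adj_eigenvalue V E \<theta> \<longleftrightarrow> (\<exists>f :: 'a \<Rightarrow> real.
     (\<exists>x\<in>V. f x \<noteq> 0) \<and>
     (\<forall>x\<in>V. (\<Sum>y\<in>{y\<in>V. E x y}. f y) = \<theta> * f x))"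

definition adj_eigenvalues :: "'a set \<Rightarrow> ('a \<Rightarrow> 'a \<Rightarrow> bool) \<Rightarrow> real set" where
  "adj_eigenvalues V E = {\<theta>. adj_eigenvalue V E \<theta>}"

definition second_largest_eigenvalue :: "'a set \<Rightarrow> ('a \<Rightarrow> 'a \<Rightarrow> bool) \<Rightarrow> real" where
  "second_largest_eigenvalue V E =
     Max (adj_eigenvalues V E - {Max (adj_eigenvalues V E)})"

definition smallest_eigenvalue :: "'a set \<Rightarrow> ('a \<Rightarrow> 'a \<Rightarrow> bool) \<Rightarrow> real" where
  "smallest_eigenvalue V E = Min (adj_eigenvalues V E)"

definition shilla :: "'a set \<Rightarrow> ('a \<Rightarrow> 'a \<Rightarrow> bool) \<Rightarrow> (nat \<Rightarrow> nat) \<Rightarrow> (nat \<Rightarrow> nat) \<Rightarrow> bool" where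
  "shilla V E b c \<longleftrightarrow> distance_regular V E 3 b c \<and>
     second_largest_eigenvalue V E = real_of_int (intersection_a b c 3)"

end

theory Submission
  imports Defs "HOL-Computational_Algebra.Polynomial"
begin

text \<open>The eigenvalues of a distance-regular graph of diameter 3 are the roots of the
  characteristic polynomial of its tridiagonal intersection matrix, the valency k being the
  largest. The Shilla condition theta_1 = a_3 makes a_3 a root of the second leading minor,
  i.e. k = b a_3, and then the quartic factors as (t - k) (t - a_3) q(t) with q(-b) < 0;
  so theta_3 is the smaller root of q and lies below -b.

  For the lower bound let f_x(v) = u_d(x,v)(\<theta>) be the spherical functions of an eigenvalue
  \<theta> and e_xy = f_y - u_1 f_x the edge vectors. For every eigenvalue \<rho>, the squared norm of
  the tensor (sum over y adjacent to x of e_xy(a_3) \<otimes> e_xy(\<rho>)) is a positive multiple of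
  (\<rho> + b^2) (k - \<rho>), whence \<rho> \<ge> -b^2. In the case of equality the tensor vanishes, which
  forces u_1(\<rho>) = u_2(\<rho>) = u_3(\<rho>), and the three-term recurrence at distance 3 then
  gives \<rho> = 0.\<close>

lemma sum_product_bilinear:
  fixes A Q :: "'b \<Rightarrow> 'a \<Rightarrow> real" and R T :: "'a \<Rightarrow> real"
  shows "(\<Sum>v\<in>V. \<Sum>v'\<in>V. (\<Sum>y\<in>N. A y v * Q y v') * (R v * T v')) =
    (\<Sum>y\<in>N. (\<Sum>v\<in>V. A y v * R v) * (\<Sum>v'\<in>V. Q y v' * T v'))"
proof -
  have "(\<Sum>y\<in>N. (\<Sum>v\<in>V. A y v * R v) * (\<Sum>v'\<in>V. Q y v' * T v'))
     = (\<Sum>y\<in>N. \<Sum>v\<in>V. \<Sum>v'\<in>V. (A y v * R v) * (Q y v' * T v'))"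
    by (simp add: sum_product)
  also have "\<dots> = (\<Sum>v\<in>V. \<Sum>y\<in>N. \<Sum>v'\<in>V. (A y v * R v) * (Q y v' * T v'))"
    by (rule sum.swap)
  also have "\<dots> = (\<Sum>v\<in>V. \<Sum>v'\<in>V. \<Sum>y\<in>N. (A y v * R v) * (Q y v' * T v'))"
    by (intro sum.cong refl) (rule sum.swap)
  also have "\<dots> = (\<Sum>v\<in>V. \<Sum>v'\<in>V. (\<Sum>y\<in>N. A y v * Q y v') * (R v * T v'))"
    by (intro sum.cong refl) (simp add: sum_distrib_right sum_distrib_left mult_ac)
  finally show ?thesis by simp
qed

lemma sum_square_tensor:
  fixes A Q :: "'b \<Rightarrow> 'a \<Rightarrow> real"
  shows "(\<Sum>v\<in>V. \<Sum>v'\<in>V. (\<Sum>y\<in>N. A y v * Q y v')^2) =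
    (\<Sum>z\<in>N. \<Sum>y\<in>N. (\<Sum>v\<in>V. A y v * A z v) * (\<Sum>v'\<in>V. Q y v' * Q z v'))"
proof -
  have "(\<Sum>v\<in>V. \<Sum>v'\<in>V. (\<Sum>y\<in>N. A y v * Q y v')^2)
      = (\<Sum>v\<in>V. \<Sum>v'\<in>V. \<Sum>z\<in>N. (\<Sum>y\<in>N. A y v * Q y v') * (A z v * Q z v'))"
    by (simp add: power2_eq_square sum_distrib_left)
  also have "\<dots> = (\<Sum>v\<in>V. \<Sum>z\<in>N. \<Sum>v'\<in>V. (\<Sum>y\<in>N. A y v * Q y v') * (A z v * Q z v'))"
    by (intro sum.cong refl) (rule sum.swap)
  also have "\<dots> = (\<Sum>z\<in>N. \<Sum>v\<in>V. \<Sum>v'\<in>V. (\<Sum>y\<in>N. A y v * Q y v') * (A z v * Q z v'))"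
    by (rule sum.swap)
  also have "\<dots> = (\<Sum>z\<in>N. \<Sum>y\<in>N. (\<Sum>v\<in>V. A y v * A z v) * (\<Sum>v'\<in>V. Q y v' * Q z v'))"
    by (intro sum.cong refl) (rule sum_product_bilinear)
  finally show ?thesis .
qed

lemma monic_cubic_neg:
  fixes e2 e1 e0 :: real
  defines "M \<equiv> 1 + \<bar>e2\<bar> + \<bar>e1\<bar> + \<bar>e0\<bar>"
  shows "(-M)^3 + e2 * (-M)^2 + e1 * (-M) + e0 < 0"
proof -
  have M: "M \<ge> 1" unfolding M_def by simp
  have "e2 * M^2 \<le> \<bar>e2\<bar> * M^2" by (simp add: mult_right_mono)
  moreover have "- e1 * M \<le> \<bar>e1\<bar> * M^2"
  proof -
    have "- e1 * M \<le> \<bar>e1\<bar> * M" using M by (intro mult_right_mono) auto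
    also have "\<dots> \<le> \<bar>e1\<bar> * M^2" using M by (simp add: mult_left_mono power2_eq_square)
    finally show ?thesis .
  qed
  moreover have "e0 \<le> \<bar>e0\<bar> * M^2"
    using M by (metis abs_ge_self abs_ge_zero mult.right_neutral mult_left_mono one_le_power order_trans)
  ultimately have "(-M)^3 + e2 * (-M)^2 + e1 * (-M) + e0 \<le> -(M^3) + (\<bar>e2\<bar> + \<bar>e1\<bar> + \<bar>e0\<bar>) * M^2"
    by (simp add: algebra_simps power2_eq_square power3_eq_cube)
  also have "\<dots> = -(M^2)" unfolding M_def by (simp add: algebra_simps power2_eq_square power3_eq_cube)
  also have "\<dots> < 0" using M by simp
  finally show ?thesis .
qed

section \<open>Distances in connected simple graphs\<close>

lemma reach_append: "reach E m x y \<Longrightarrow> reach E n y z \<Longrightarrow> reach E (m + n) x z"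
  by (induction m arbitrary: x) auto

lemma gdist_le_reach: "reach E n x y \<Longrightarrow> gdist E x y \<le> n"
  unfolding gdist_def by (rule Least_le)

lemma gdist_self: "gdist E x x = 0"
  using gdist_le_reach[of E 0 x x] by simp

locale connected_simple_graph =
  fixes V :: "'a set" and E :: "'a \<Rightarrow> 'a \<Rightarrow> bool"
  assumes simple: "simple_graph V E" and connected: "connected_graph V E"
begin

lemma finite_V: "finite V"
  using simple unfolding simple_graph_def by blast

lemma V_nonempty: "V \<noteq> {}"
  using simple unfolding simple_graph_def by blast

lemma edge_in_V: "E x y \<Longrightarrow> x \<in> V \<and> y \<in> V"
  using simple unfolding simple_graph_def by blast

lemma edge_sym: "E x y \<Longrightarrow> E y x"
  using simple unfolding simple_graph_def by blast

lemma edge_irrefl: "\<not> E x x"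
  using simple unfolding simple_graph_def by blast

lemma finite_neighbours: "finite {z \<in> V. E y z}"
  using finite_V by simp

lemma reach_sym: "reach E n x y \<Longrightarrow> reach E n y x"
proof (induction n arbitrary: x)
  case 0
  then show ?case by simp
next
  case (Suc n)
  then obtain z where z: "E x z" "reach E n z y" by auto
  have "reach E n y z" using Suc.IH z(2) by blast
  moreover have "reach E 1 z x" using z(1) edge_sym by auto
  ultimately have "reach E (n + 1) y x" by (rule reach_append)
  then show ?case by simp
qed

lemma reach_gdist: "x \<in> V \<Longrightarrow> y \<in> V \<Longrightarrow> reach E (gdist E x y) x y"
  using connected unfolding gdist_def connected_graph_def by (meson LeastI_ex)

lemma gdist_sym: "x \<in> V \<Longrightarrow> y \<in> V \<Longrightarrow> gdist E x y = gdist E y x"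
  by (meson antisym gdist_le_reach reach_gdist reach_sym)

lemma gdist_eq_0_iff: "x \<in> V \<Longrightarrow> y \<in> V \<Longrightarrow> gdist E x y = 0 \<longleftrightarrow> x = y"
  by (metis gdist_le_reach reach_gdist le_zero_eq reach.simps(1))

lemma gdist_edge: "E x y \<Longrightarrow> gdist E x y = 1"
proof -
  assume xy: "E x y"
  then have "gdist E x y \<le> 1" using gdist_le_reach[of E 1 x y] by simp
  moreover have "gdist E x y \<noteq> 0" using xy edge_irrefl edge_in_V gdist_eq_0_iff by blast
  ultimately show ?thesis by simp
qed

lemma gdist_eq_1_iff: "x \<in> V \<Longrightarrow> y \<in> V \<Longrightarrow> gdist E x y = 1 \<longleftrightarrow> E x y"
  using gdist_edge reach_gdist by fastforce

lemma gdist_triangle: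
  "x \<in> V \<Longrightarrow> y \<in> V \<Longrightarrow> z \<in> V \<Longrightarrow> gdist E x z \<le> gdist E x y + gdist E y z"
  by (meson gdist_le_reach reach_gdist reach_append)

lemma gdist_edge_le: "x \<in> V \<Longrightarrow> E y z \<Longrightarrow> gdist E x z \<le> gdist E x y + 1"
  using gdist_triangle[of x y z] gdist_edge[of y z] edge_in_V by force

lemma gdist_edge_cases: "x \<in> V \<Longrightarrow> E y z \<Longrightarrow>
   gdist E x z + 1 = gdist E x y \<or> gdist E x z = gdist E x y \<or> gdist E x z = gdist E x y + 1"
  using gdist_edge_le[of x y z] gdist_edge_le[of x z y] edge_sym by force

lemma gdist_Suc_neighbour:
  assumes "x \<in> V" "y \<in> V" "gdist E x y = Suc n"
  shows "\<exists>z. E y z \<and> gdist E x z = n"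
proof -
  have "reach E (Suc n) y x" using reach_gdist[of x y] assms reach_sym by metis
  then obtain z where z: "E y z" "reach E n z x" by auto
  then have "gdist E x z \<le> n" using gdist_le_reach gdist_sym edge_in_V assms(1) by metis
  moreover have "gdist E x y \<le> gdist E x z + 1" using gdist_edge_le[of x z y] assms(1) edge_sym z(1) by blast
  ultimately show ?thesis using assms(3) z(1) by (intro exI[of _ z]) auto
qed

lemma finite_gdists: "finite {gdist E x y | x y. x \<in> V \<and> y \<in> V}"
proof -
  have "{gdist E x y | x y. x \<in> V \<and> y \<in> V} = (\<lambda>(x, y). gdist E x y) ` (V \<times> V)" by auto
  then show ?thesis using finite_V by simp
qed

lemma gdist_le_diameter: "x \<in> V \<Longrightarrow> y \<in> V \<Longrightarrow> gdist E x y \<le> diameter V E"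
  unfolding diameter_def by (rule Max_ge[OF finite_gdists]) blast

lemma diameter_attained: "\<exists>x y. x \<in> V \<and> y \<in> V \<and> gdist E x y = diameter V E"
proof -
  have "{gdist E x y | x y. x \<in> V \<and> y \<in> V} \<noteq> {}" using V_nonempty by blast
  then have "diameter V E \<in> {gdist E x y | x y. x \<in> V \<and> y \<in> V}"
    unfolding diameter_def by (rule Max_in[OF finite_gdists])
  then show ?thesis by force
qed

lemma sum_neighbours_by_gdist:
  fixes y :: 'a and h :: "nat \<Rightarrow> real"
  assumes x: "x \<in> V"
  defines "i \<equiv> gdist E x y"
  shows "(\<Sum>z\<in>{z\<in>V. E y z}. h (gdist E x z)) =
     real (card {z\<in>V. E y z \<and> gdist E x z + 1 = i}) * h (i - 1)
   + real (card {z\<in>V. E y z \<and> gdist E x z = i}) * h i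
   + real (card {z\<in>V. E y z \<and> gdist E x z = i + 1}) * h (i + 1)"
proof -
  let ?N = "{z\<in>V. E y z}"
  have "(\<Sum>z\<in>?N. h (gdist E x z)) = (\<Sum>z\<in>?N. (if gdist E x z + 1 = i then h (i - 1) else 0)
      + (if gdist E x z = i then h i else 0) + (if gdist E x z = i + 1 then h (i + 1) else 0))"
  proof (rule sum.cong[OF refl])
    fix z assume "z \<in> ?N"
    then have "gdist E x z + 1 = i \<or> gdist E x z = i \<or> gdist E x z = i + 1"
      using gdist_edge_cases[OF x, of y z] unfolding i_def by blast
    then show "h (gdist E x z) = (if gdist E x z + 1 = i then h (i - 1) else 0)
      + (if gdist E x z = i then h i else 0) + (if gdist E x z = i + 1 then h (i + 1) else 0)"
      by auto
  qed
  also have "\<dots> = (\<Sum>z\<in>?N. if gdist E x z + 1 = i then h (i - 1) else 0)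
      + (\<Sum>z\<in>?N. if gdist E x z = i then h i else 0)
      + (\<Sum>z\<in>?N. if gdist E x z = i + 1 then h (i + 1) else 0)"
    by (simp add: sum.distrib)
  also have "\<dots> = real (card {z\<in>?N. gdist E x z + 1 = i}) * h (i - 1)
      + real (card {z\<in>?N. gdist E x z = i}) * h i
      + real (card {z\<in>?N. gdist E x z = i + 1}) * h (i + 1)"
    using finite_neighbours by (simp add: sum.inter_filter[symmetric])
  also have "{z\<in>?N. gdist E x z + 1 = i} = {z\<in>V. E y z \<and> gdist E x z + 1 = i}" by auto
  also have "{z\<in>?N. gdist E x z = i} = {z\<in>V. E y z \<and> gdist E x z = i}" by auto
  also have "{z\<in>?N. gdist E x z = i + 1} = {z\<in>V. E y z \<and> gdist E x z = i + 1}" by auto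
  finally show ?thesis .
qed

definition layer_sum :: "'a \<Rightarrow> ('a \<Rightarrow> real) \<Rightarrow> nat \<Rightarrow> real" where
  "layer_sum x g j = (\<Sum>z\<in>{z\<in>V. gdist E x z = j}. g z)"

lemma layer_sum_0: "x \<in> V \<Longrightarrow> layer_sum x g 0 = g x"
proof -
  assume x: "x \<in> V"
  have "{z\<in>V. gdist E x z = 0} = {x}" using gdist_eq_0_iff[OF x] x by auto
  then show ?thesis unfolding layer_sum_def by simp
qed

end

section \<open>Distance-regular graphs of diameter 3\<close>

locale distance_regular_3 =
  fixes V :: "'a set" and E :: "'a \<Rightarrow> 'a \<Rightarrow> bool" and b c :: "nat \<Rightarrow> nat"
  assumes distance_regular: "distance_regular V E 3 b c"

sublocale distance_regular_3 \<subseteq> connected_simple_graph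
  using distance_regular unfolding distance_regular_def by unfold_locales auto

context distance_regular_3
begin

abbreviation "kk \<equiv> real (b 0)"
abbreviation "bb i \<equiv> real (b i)"
abbreviation "cc i \<equiv> real (c i)"
abbreviation "aa i \<equiv> real_of_int (intersection_a b c i)"

lemma aa_eq: "aa i = kk - bb i - cc i"
  unfolding intersection_a_def by simp

lemma gdist_le_3: "x \<in> V \<Longrightarrow> y \<in> V \<Longrightarrow> gdist E x y \<le> 3"
  using gdist_le_diameter distance_regular unfolding distance_regular_def by metis

lemma geodesic_3:
  "\<exists>x y1 y2 y3. x \<in> V \<and> y1 \<in> V \<and> y2 \<in> V \<and> y3 \<in> V \<and> E x y1 \<and> E y1 y2 \<and> E y2 y3 \<and>
     gdist E x y1 = 1 \<and> gdist E x y2 = 2 \<and> gdist E x y3 = 3"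
proof -
  obtain x y3 where x: "x \<in> V" and y3: "y3 \<in> V" "gdist E x y3 = 3"
    using diameter_attained distance_regular unfolding distance_regular_def by metis
  obtain y2 where y2: "E y3 y2" "gdist E x y2 = 2"
    using gdist_Suc_neighbour[OF x y3(1)] y3(2) by (metis numeral_3_eq_3 numeral_2_eq_2)
  obtain y1 where y1: "E y2 y1" "gdist E x y1 = 1"
    using gdist_Suc_neighbour[OF x, of y2] y2 edge_in_V by (metis numeral_2_eq_2 One_nat_def)
  have "E x y1" using gdist_eq_1_iff[OF x, of y1] y1 edge_in_V by blast
  then show ?thesis using x y3 y2 y1 edge_in_V edge_sym by blast
qed

lemma card_neighbours_intersection_numbers:
  assumes "x \<in> V" "y \<in> V"
  shows "card {z\<in>V. E y z \<and> gdist E x z + 1 = gdist E x y} = c (gdist E x y)"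
    and "card {z\<in>V. E y z \<and> gdist E x z = gdist E x y + 1} = b (gdist E x y)"
proof -
  have "\<And>P. {z\<in>V. E y z \<and> P z} = {z. E y z \<and> P z}" using edge_in_V by blast
  then show "card {z\<in>V. E y z \<and> gdist E x z + 1 = gdist E x y} = c (gdist E x y)"
    and "card {z\<in>V. E y z \<and> gdist E x z = gdist E x y + 1} = b (gdist E x y)"
    using distance_regular gdist_le_3[OF assms] assms unfolding distance_regular_def by simp_all
qed

lemmas card_closer_neighbours = card_neighbours_intersection_numbers(1)
  and card_farther_neighbours = card_neighbours_intersection_numbers(2)

lemma degree: "y \<in> V \<Longrightarrow> card {z\<in>V. E y z} = b 0"
proof -
  assume y: "y \<in> V"
  have "{z\<in>V. E y z} = {z\<in>V. E y z \<and> gdist E y z = gdist E y y + 1}"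
    using gdist_edge gdist_self[of E y] by auto
  then show ?thesis using card_farther_neighbours[OF y y] gdist_self[of E y] by simp
qed

lemma card_level_neighbours:
  assumes "x \<in> V" "y \<in> V"
  shows "real (card {z\<in>V. E y z \<and> gdist E x z = gdist E x y}) = aa (gdist E x y)"
proof -
  have "kk = (\<Sum>z\<in>{z\<in>V. E y z}. (\<lambda>_. 1::real) (gdist E x z))"
    using degree[OF assms(2)] by simp
  also have "\<dots> = cc (gdist E x y) + real (card {z\<in>V. E y z \<and> gdist E x z = gdist E x y})
      + bb (gdist E x y)"
    using sum_neighbours_by_gdist[OF assms(1), where y = y and h = "\<lambda>_. 1"]
      card_closer_neighbours[OF assms] card_farther_neighbours[OF assms] by simp
  finally show ?thesis using aa_eq by simp
qed

lemma sum_neighbours: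
  assumes "x \<in> V" "y \<in> V"
  shows "(\<Sum>z\<in>{z\<in>V. E y z}. h (gdist E x z)) = cc (gdist E x y) * h (gdist E x y - 1)
     + aa (gdist E x y) * h (gdist E x y) + bb (gdist E x y) * h (gdist E x y + 1)"
  using sum_neighbours_by_gdist[OF assms(1), where y = y and h = h] card_closer_neighbours[OF assms]
    card_farther_neighbours[OF assms] card_level_neighbours[OF assms] by simp

lemma farther_neighbour_imp_b_pos:
  assumes "x \<in> V" "E y z" "gdist E x z = gdist E x y + 1"
  shows "1 \<le> b (gdist E x y)"
proof -
  have "z \<in> {z\<in>V. E y z \<and> gdist E x z = gdist E x y + 1}" using assms edge_in_V by blast
  then have "card {z\<in>V. E y z \<and> gdist E x z = gdist E x y + 1} \<noteq> 0" using finite_V by auto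
  then show ?thesis using card_farther_neighbours[of x y] assms edge_in_V by simp
qed

lemma closer_neighbour_imp_c_pos:
  assumes "x \<in> V" "E y z" "gdist E x z + 1 = gdist E x y"
  shows "1 \<le> c (gdist E x y)"
proof -
  have "z \<in> {z\<in>V. E y z \<and> gdist E x z + 1 = gdist E x y}" using assms edge_in_V by blast
  then have "card {z\<in>V. E y z \<and> gdist E x z + 1 = gdist E x y} \<noteq> 0" using finite_V by auto
  then show ?thesis using card_closer_neighbours[of x y] assms edge_in_V by simp
qed

lemma intersection_numbers: "c 0 = 0" "c 1 = 1" "b 3 = 0"
  "b 0 \<ge> 1" "b 1 \<ge> 1" "b 2 \<ge> 1" "c 2 \<ge> 1" "c 3 \<ge> 1" "0 \<le> aa 3"
proof -
  obtain x y1 y2 y3 where geo: "x \<in> V" "y1 \<in> V" "y2 \<in> V" "y3 \<in> V" "E x y1" "E y1 y2" "E y2 y3"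
    "gdist E x y1 = 1" "gdist E x y2 = 2" "gdist E x y3 = 3"
    using geodesic_3 by blast
  show "c 0 = 0" using card_closer_neighbours[of x x] geo gdist_self[of E x] by simp
  have "{z\<in>V. E y1 z \<and> gdist E x z + 1 = gdist E x y1} = {x}"
    using geo gdist_eq_0_iff[of x] edge_sym by auto
  then show "c 1 = 1" using card_closer_neighbours[of x y1] geo by simp
  have "{z\<in>V. E y3 z \<and> gdist E x z = gdist E x y3 + 1} = {}"
    using geo gdist_le_3[of x] by fastforce
  then show "b 3 = 0" using card_farther_neighbours[of x y3] geo by (metis card.empty)
  show "b 0 \<ge> 1" using farther_neighbour_imp_b_pos[of x x y1] geo gdist_self[of E x] by simp
  show "b 1 \<ge> 1" using farther_neighbour_imp_b_pos[of x y1 y2] geo by simp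
  show "b 2 \<ge> 1" using farther_neighbour_imp_b_pos[of x y2 y3] geo by simp
  show "c 2 \<ge> 1" using closer_neighbour_imp_c_pos[of x y2 y1] geo edge_sym by simp
  show "c 3 \<ge> 1" using closer_neighbour_imp_c_pos[of x y3 y2] geo edge_sym by simp
  show "0 \<le> aa 3" using card_level_neighbours[of x y3] geo by (metis of_nat_0_le_iff)
qed

lemma intersection_numbers_real: "kk \<ge> 1" "bb 1 \<ge> 1" "bb 2 \<ge> 1" "cc 2 \<ge> 1" "cc 3 \<ge> 1"
  "cc 0 = 0" "cc 1 = 1" "bb 3 = 0" "aa 0 = 0"
  using intersection_numbers aa_eq[of 0] by auto

section \<open>Eigenvalues and the intersection matrix\<close>

definition intersection_matrix :: "nat \<Rightarrow> nat \<Rightarrow> real" where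
  "intersection_matrix i j = cc i * (if i - 1 = j then 1 else 0) + aa i * (if i = j then 1 else 0)
     + bb i * (if i + 1 = j then 1 else 0)"

text \<open>\<open>charpoly\<close> is the characteristic polynomial \<open>det (t I - L)\<close> of the tridiagonal
  intersection matrix \<open>L = intersection_matrix\<close> (rows and columns indexed by 0..3, the truncated
  \<open>i - 1\<close> at \<open>i = 0\<close> being harmless as \<open>c 0 = 0\<close>); \<open>charpoly2\<close> and \<open>charpoly3\<close> are its
  leading principal minors.\<close>

definition charpoly2 :: "real \<Rightarrow> real" where
  "charpoly2 t = (t - aa 1) * t - kk"

definition charpoly3 :: "real \<Rightarrow> real" where
  "charpoly3 t = (t - aa 2) * charpoly2 t - bb 1 * cc 2 * t"

definition charpoly :: "real \<Rightarrow> real" where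
  "charpoly t = (t - aa 3) * charpoly3 t - bb 2 * cc 3 * charpoly2 t"

text \<open>The cosine sequence u_i(\<theta>); its values for i > 3 are junk.\<close>

definition cosine :: "real \<Rightarrow> nat \<Rightarrow> real" where
  "cosine \<theta> i = (if i = 0 then 1 else if i = 1 then \<theta> / kk
     else if i = 2 then charpoly2 \<theta> / (kk * bb 1) else charpoly3 \<theta> / (kk * bb 1 * bb 2))"

lemma sum_by_layers:
  fixes H :: "nat \<Rightarrow> real"
  assumes x: "x \<in> V"
  shows "(\<Sum>z\<in>V. H (gdist E x z) * g z) = (\<Sum>j<4. H j * layer_sum x g j)"
proof -
  have "(\<Sum>j<4. H j * layer_sum x g j) = (\<Sum>j<4. \<Sum>z\<in>V. if gdist E x z = j then H j * g z else 0)"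
    unfolding layer_sum_def
    by (auto simp: sum_distrib_left sum.inter_filter[OF finite_V] intro!: sum.cong)
  also have "\<dots> = (\<Sum>z\<in>V. \<Sum>j<4. if gdist E x z = j then H j * g z else 0)"
    by (rule sum.swap)
  also have "\<dots> = (\<Sum>z\<in>V. H (gdist E x z) * g z)"
  proof (rule sum.cong[OF refl])
    fix z assume "z \<in> V"
    then have "gdist E x z < 4" using gdist_le_3[OF x] by fastforce
    then show "(\<Sum>j<4. if gdist E x z = j then H j * g z else 0) = H (gdist E x z) * g z"
      by (simp add: sum.delta)
  qed
  finally show ?thesis by simp
qed

lemma eigenvector_layer_recurrence:
  assumes x: "x \<in> V" and eig: "\<forall>y\<in>V. (\<Sum>z\<in>{z\<in>V. E y z}. g z) = \<theta> * g y"
  shows "\<theta> * layer_sum x g i = (\<Sum>j<4. intersection_matrix j i * layer_sum x g j)"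
proof -
  let ?ind = "\<lambda>n. if n = i then 1 else 0 :: real"
  have "\<theta> * layer_sum x g i = (\<Sum>y\<in>{y\<in>V. gdist E x y = i}. \<Sum>z\<in>{z\<in>V. E y z}. g z)"
    unfolding layer_sum_def using eig by (simp add: sum_distrib_left)
  also have "\<dots> = (\<Sum>y\<in>V. \<Sum>z\<in>V. if gdist E x y = i \<and> E y z then g z else 0)"
    by (simp add: sum.inter_filter[OF finite_V] if_distrib cong: if_cong, intro sum.cong refl, auto)
  also have "\<dots> = (\<Sum>z\<in>V. \<Sum>y\<in>V. if gdist E x y = i \<and> E y z then g z else 0)"
    by (rule sum.swap)
  also have "\<dots> = (\<Sum>z\<in>V. g z * (\<Sum>y\<in>{y\<in>V. E z y}. ?ind (gdist E x y)))"
  proof (rule sum.cong[OF refl])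
    fix z assume "z \<in> V"
    have "(\<Sum>y\<in>V. if gdist E x y = i \<and> E y z then g z else 0)
       = (\<Sum>y\<in>V. g z * (if E z y then ?ind (gdist E x y) else 0))"
      using edge_sym by (intro sum.cong) auto
    also have "\<dots> = g z * (\<Sum>y\<in>{y\<in>V. E z y}. ?ind (gdist E x y))"
      using finite_V by (simp add: sum.inter_filter sum_distrib_left)
    finally show "(\<Sum>y\<in>V. if gdist E x y = i \<and> E y z then g z else 0) =
       g z * (\<Sum>y\<in>{y\<in>V. E z y}. ?ind (gdist E x y))" .
  qed
  also have "\<dots> = (\<Sum>z\<in>V. intersection_matrix (gdist E x z) i * g z)"
    by (intro sum.cong refl, subst sum_neighbours[OF x], auto simp: intersection_matrix_def)
  also have "\<dots> = (\<Sum>j<4. intersection_matrix j i * layer_sum x g j)"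
    by (rule sum_by_layers[OF x])
  finally show ?thesis .
qed

lemma eigenvector_layer_sums:
  assumes x: "x \<in> V" and eig: "\<forall>y\<in>V. (\<Sum>z\<in>{z\<in>V. E y z}. g z) = \<theta> * g y"
  defines "S \<equiv> layer_sum x g"
  shows "S 0 = g x" "S 1 = \<theta> * S 0" "S 2 = charpoly2 \<theta> * S 0 / cc 2"
    "S 3 = charpoly3 \<theta> * S 0 / (cc 2 * cc 3)" "charpoly \<theta> * S 0 = 0"
proof -
  have rec: "\<theta> * S i = (\<Sum>j<4. intersection_matrix j i * S j)" for i
    unfolding S_def using eigenvector_layer_recurrence[OF x eig] by blast
  have e0: "\<theta> * S 0 = S 1"
    using rec[of 0] intersection_numbers_real by (simp add: intersection_matrix_def eval_nat_numeral)
  have e1: "\<theta> * S 1 = kk * S 0 + aa 1 * S 1 + cc 2 * S 2"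
    using rec[of 1] intersection_numbers_real by (simp add: intersection_matrix_def eval_nat_numeral)
  have e2: "\<theta> * S 2 = bb 1 * S 1 + aa 2 * S 2 + cc 3 * S 3"
    using rec[of 2] intersection_numbers_real by (simp add: intersection_matrix_def eval_nat_numeral)
  have e3: "\<theta> * S 3 = bb 2 * S 2 + aa 3 * S 3"
    using rec[of 3] intersection_numbers_real by (simp add: intersection_matrix_def eval_nat_numeral)
  show "S 0 = g x" unfolding S_def by (rule layer_sum_0[OF x])
  show s1: "S 1 = \<theta> * S 0" using e0 by simp
  have c2: "cc 2 * S 2 = charpoly2 \<theta> * S 0"
    using e1 s1 unfolding charpoly2_def by (simp add: algebra_simps)
  then show "S 2 = charpoly2 \<theta> * S 0 / cc 2" using intersection_numbers_real by (simp add: field_simps)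
  have c3: "cc 2 * cc 3 * S 3 = charpoly3 \<theta> * S 0"
  proof -
    have "cc 2 * cc 3 * S 3 - charpoly3 \<theta> * S 0
        = - cc 2 * (\<theta> * S 2 - (bb 1 * S 1 + aa 2 * S 2 + cc 3 * S 3))
          + (\<theta> - aa 2) * (cc 2 * S 2 - charpoly2 \<theta> * S 0) - bb 1 * cc 2 * (S 1 - \<theta> * S 0)"
      unfolding charpoly3_def by (simp add: algebra_simps)
    then show ?thesis using e2 s1 c2 by simp
  qed
  then show "S 3 = charpoly3 \<theta> * S 0 / (cc 2 * cc 3)" using intersection_numbers_real by (simp add: field_simps)
  have "charpoly \<theta> * S 0 = cc 2 * cc 3 * (\<theta> * S 3 - (bb 2 * S 2 + aa 3 * S 3))
      - (\<theta> - aa 3) * (cc 2 * cc 3 * S 3 - charpoly3 \<theta> * S 0)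
      + bb 2 * cc 3 * (cc 2 * S 2 - charpoly2 \<theta> * S 0)"
    unfolding charpoly_def by (simp add: algebra_simps)
  then show "charpoly \<theta> * S 0 = 0" using e3 c2 c3 by simp
qed

lemma eigenvalue_imp_charpoly_root: "adj_eigenvalue V E \<theta> \<Longrightarrow> charpoly \<theta> = 0"
proof -
  assume "adj_eigenvalue V E \<theta>"
  then obtain g :: "'a \<Rightarrow> real" and x where "x \<in> V" "g x \<noteq> 0"
    "\<forall>y\<in>V. (\<Sum>z\<in>{z\<in>V. E y z}. g z) = \<theta> * g y"
    unfolding adj_eigenvalue_def by blast
  with eigenvector_layer_sums(1,5)[of x g \<theta>] show ?thesis by simp
qed

lemma cosine_simps: "cosine \<theta> 0 = 1" "cosine \<theta> (Suc 0) = \<theta> / kk" "cosine \<theta> 1 = \<theta> / kk"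
  "cosine \<theta> 2 = charpoly2 \<theta> / (kk * bb 1)" "cosine \<theta> 3 = charpoly3 \<theta> / (kk * bb 1 * bb 2)"
  unfolding cosine_def by auto

lemma cosine_recurrence:
  assumes root: "charpoly \<theta> = 0" and i: "i \<le> 3"
  shows "cc i * cosine \<theta> (i - 1) + aa i * cosine \<theta> i + bb i * cosine \<theta> (i + 1) = \<theta> * cosine \<theta> i"
proof -
  have nz: "kk \<noteq> 0" "bb 1 \<noteq> 0" "bb 2 \<noteq> 0" using intersection_numbers_real by auto
  have r1: "cc 1 * cosine \<theta> 0 + aa 1 * cosine \<theta> 1 + bb 1 * cosine \<theta> 2 = \<theta> * cosine \<theta> 1"
    using intersection_numbers_real nz by (simp add: cosine_simps charpoly2_def field_simps)
  have r2: "cc 2 * cosine \<theta> 1 + aa 2 * cosine \<theta> 2 + bb 2 * cosine \<theta> 3 = \<theta> * cosine \<theta> 2"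
    using nz by (simp add: cosine_simps charpoly3_def field_simps)
  have r3: "cc 3 * cosine \<theta> 2 + aa 3 * cosine \<theta> 3 = \<theta> * cosine \<theta> 3"
    using nz root by (simp add: cosine_simps charpoly_def field_simps)
  consider "i = 0" | "i = 1" | "i = 2" | "i = 3" using i by linarith
  then show ?thesis
  proof cases
    case 1
    then show ?thesis using intersection_numbers_real by (simp add: cosine_simps)
  next
    case 2
    then show ?thesis using r1 by (simp add: eval_nat_numeral)
  next
    case 3
    then show ?thesis using r2 by (simp add: eval_nat_numeral)
  next
    case 4
    then show ?thesis using r3 intersection_numbers_real by (simp add: eval_nat_numeral)
  qed
qed

lemma cosine_eigenfunction:
  assumes "charpoly \<theta> = 0" and x: "x \<in> V" and y: "y \<in> V"
  shows "(\<Sum>z\<in>{z\<in>V. E y z}. cosine \<theta> (gdist E x z)) = \<theta> * cosine \<theta> (gdist E x y)"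
  using sum_neighbours[OF x y] cosine_recurrence[OF assms(1) gdist_le_3[OF x y]] by simp

lemma charpoly_root_imp_eigenvalue: "charpoly \<theta> = 0 \<Longrightarrow> adj_eigenvalue V E \<theta>"
proof -
  assume root: "charpoly \<theta> = 0"
  obtain x where x: "x \<in> V" using V_nonempty by blast
  show ?thesis unfolding adj_eigenvalue_def
    using cosine_eigenfunction[OF root x] x gdist_self[of E x] cosine_simps(1)
    by (intro exI[of _ "\<lambda>y. cosine \<theta> (gdist E x y)"]) (auto intro!: bexI[of _ x])
qed

lemma valency_eigenvalue: "adj_eigenvalue V E kk"
proof -
  obtain x where "x \<in> V" using V_nonempty by blast
  then show ?thesis unfolding adj_eigenvalue_def
    by (intro exI[of _ "\<lambda>_. 1"]) (use degree in auto)
qed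

lemma eigenvalue_le_valency: "adj_eigenvalue V E \<theta> \<Longrightarrow> \<theta> \<le> kk"
proof -
  assume "adj_eigenvalue V E \<theta>"
  then obtain f :: "'a \<Rightarrow> real" and x0 where f: "x0 \<in> V" "f x0 \<noteq> 0"
    "\<forall>x\<in>V. (\<Sum>y\<in>{y\<in>V. E x y}. f y) = \<theta> * f x"
    unfolding adj_eigenvalue_def by blast
  have fin: "finite ((\<lambda>y. \<bar>f y\<bar>) ` V)" using finite_V by simp
  obtain x where x: "x \<in> V" "\<bar>f x\<bar> = Max ((\<lambda>y. \<bar>f y\<bar>) ` V)"
    using Max_in[OF fin] V_nonempty by fastforce
  have le: "y \<in> V \<Longrightarrow> \<bar>f y\<bar> \<le> \<bar>f x\<bar>" for y
    unfolding x(2) using Max_ge[OF fin] by blast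
  have "\<bar>\<theta>\<bar> * \<bar>f x\<bar> = \<bar>\<Sum>y\<in>{y\<in>V. E x y}. f y\<bar>" using f(3) x by (simp add: abs_mult)
  also have "\<dots> \<le> (\<Sum>y\<in>{y\<in>V. E x y}. \<bar>f y\<bar>)" by (rule sum_abs)
  also have "\<dots> \<le> (\<Sum>y\<in>{y\<in>V. E x y}. \<bar>f x\<bar>)" by (rule sum_mono) (use le in auto)
  also have "\<dots> = kk * \<bar>f x\<bar>" using degree[OF x(1)] by simp
  finally have "\<bar>\<theta>\<bar> * \<bar>f x\<bar> \<le> kk * \<bar>f x\<bar>" .
  moreover have "\<bar>f x\<bar> > 0" using le[OF f(1)] f(2) by simp
  ultimately show ?thesis by simp
qed

definition charpoly_cofactor :: "real \<Rightarrow> real" where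
  "charpoly_cofactor t = charpoly3 t + cc 3 * (charpoly2 t + cc 2 * (t + 1))"

lemma aa_eq_123: "aa 1 = kk - bb 1 - 1" "aa 2 = kk - bb 2 - cc 2" "aa 3 = kk - cc 3"
  using aa_eq[of 1] aa_eq[of 2] aa_eq[of 3] intersection_numbers_real by auto

lemma charpoly_factor: "charpoly t = (t - kk) * charpoly_cofactor t"
  unfolding charpoly_def charpoly3_def charpoly2_def charpoly_cofactor_def aa_eq_123
  by (simp add: algebra_simps)

lemma charpoly_cofactor_expand: "charpoly_cofactor t = t^3 + (cc 3 - aa 1 - aa 2) * t^2
    + (aa 1 * aa 2 - kk - bb 1 * cc 2 - cc 3 * aa 1 + cc 3 * cc 2) * t + (aa 2 * kk - cc 3 * kk + cc 3 * cc 2)"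
  unfolding charpoly_cofactor_def charpoly3_def charpoly2_def
  by (simp add: algebra_simps power2_eq_square power3_eq_cube)

lemma charpoly_cofactor_valency_pos: "charpoly_cofactor kk > 0"
proof -
  have "charpoly_cofactor kk = kk * bb 1 * bb 2 + cc 3 * (kk * bb 1 + cc 2 * (kk + 1))"
    unfolding charpoly_cofactor_def charpoly3_def charpoly2_def aa_eq_123 by (simp add: algebra_simps)
  also have "\<dots> > 0" using intersection_numbers_real by (simp add: add_pos_pos)
  finally show ?thesis .
qed

lemma finite_eigenvalues: "finite (adj_eigenvalues V E)"
proof -
  define p where "p = [:-kk, 1:] * [:aa 2 * kk - cc 3 * kk + cc 3 * cc 2,
    aa 1 * aa 2 - kk - bb 1 * cc 2 - cc 3 * aa 1 + cc 3 * cc 2, cc 3 - aa 1 - aa 2, 1:]"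
  have "p \<noteq> 0" unfolding p_def by simp
  moreover have "poly p t = charpoly t" for t
    unfolding p_def charpoly_factor charpoly_cofactor_expand
    by (simp add: algebra_simps power2_eq_square power3_eq_cube)
  then have "adj_eigenvalues V E \<subseteq> {t. poly p t = 0}"
    unfolding adj_eigenvalues_def using eigenvalue_imp_charpoly_root by auto
  ultimately show ?thesis using poly_roots_finite finite_subset by blast
qed

lemma Max_eigenvalues: "Max (adj_eigenvalues V E) = kk"
  by (rule Max_eqI[OF finite_eigenvalues])
    (use eigenvalue_le_valency valency_eigenvalue adj_eigenvalues_def in auto)

lemma eigenvalue_less_valency_exists: "\<exists>\<theta>. adj_eigenvalue V E \<theta> \<and> \<theta> < kk"
proof -
  define M where "M = 1 + \<bar>cc 3 - aa 1 - aa 2\<bar>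
    + \<bar>aa 1 * aa 2 - kk - bb 1 * cc 2 - cc 3 * aa 1 + cc 3 * cc 2\<bar> + \<bar>aa 2 * kk - cc 3 * kk + cc 3 * cc 2\<bar>"
  have "charpoly_cofactor (-M) < 0"
    unfolding charpoly_cofactor_expand M_def by (rule monic_cubic_neg)
  moreover have "-M \<le> kk" unfolding M_def using intersection_numbers_real by simp
  moreover have "continuous_on {-M..kk} charpoly_cofactor"
    unfolding charpoly_cofactor_expand by (intro continuous_intros)
  ultimately obtain t where t: "-M \<le> t" "t \<le> kk" "charpoly_cofactor t = 0"
    using IVT'[of charpoly_cofactor "-M" 0 kk] charpoly_cofactor_valency_pos by auto
  then have "t \<noteq> kk" using charpoly_cofactor_valency_pos by auto
  then show ?thesis
    using t charpoly_root_imp_eigenvalue[of t] charpoly_factor[of t] by force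
qed

lemma second_largest_eigenvalue_root: "charpoly (second_largest_eigenvalue V E) = 0"
proof -
  have fin: "finite (adj_eigenvalues V E - {kk})" using finite_eigenvalues by simp
  have "adj_eigenvalues V E - {kk} \<noteq> {}"
    using eigenvalue_less_valency_exists unfolding adj_eigenvalues_def by force
  from Max_in[OF fin this] have "second_largest_eigenvalue V E \<in> adj_eigenvalues V E"
    unfolding second_largest_eigenvalue_def Max_eigenvalues by blast
  then show ?thesis unfolding adj_eigenvalues_def using eigenvalue_imp_charpoly_root by blast
qed

definition cosine_sq_norm :: "real \<Rightarrow> real" where
  "cosine_sq_norm \<theta> = 1 + \<theta> * \<theta> / kk + charpoly2 \<theta> * charpoly2 \<theta> / (kk * bb 1 * cc 2)
    + charpoly3 \<theta> * charpoly3 \<theta> / (kk * bb 1 * bb 2 * cc 2 * cc 3)"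

lemma cosine_sq_norm_pos: "cosine_sq_norm \<theta> > 0"
proof -
  have "0 \<le> \<theta> * \<theta> / kk" "0 \<le> charpoly2 \<theta> * charpoly2 \<theta> / (kk * bb 1 * cc 2)"
    "0 \<le> charpoly3 \<theta> * charpoly3 \<theta> / (kk * bb 1 * bb 2 * cc 2 * cc 3)"
    using intersection_numbers_real by simp_all
  then show ?thesis unfolding cosine_sq_norm_def by linarith
qed

lemma cosine_inner:
  assumes root: "charpoly \<theta> = 0" and y: "y \<in> V" and z: "z \<in> V"
  shows "(\<Sum>v\<in>V. cosine \<theta> (gdist E y v) * cosine \<theta> (gdist E z v))
    = cosine_sq_norm \<theta> * cosine \<theta> (gdist E y z)"
proof -
  define g where "g = (\<lambda>v. cosine \<theta> (gdist E z v))"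
  have "\<forall>u\<in>V. (\<Sum>v\<in>{v\<in>V. E u v}. g v) = \<theta> * g u"
    unfolding g_def using cosine_eigenfunction[OF root z] by blast
  note S = eigenvector_layer_sums[OF y this]
  have "(\<Sum>v\<in>V. cosine \<theta> (gdist E y v) * g v) = (\<Sum>j<4. cosine \<theta> j * layer_sum y g j)"
    by (rule sum_by_layers[OF y])
  also have "\<dots> = cosine \<theta> 0 * layer_sum y g 0 + cosine \<theta> 1 * layer_sum y g 1
      + cosine \<theta> 2 * layer_sum y g 2 + cosine \<theta> 3 * layer_sum y g 3"
    by (simp add: eval_nat_numeral)
  also have "\<dots> = cosine_sq_norm \<theta> * g y"
    using intersection_numbers_real unfolding S(2-4) S(1) cosine_simps cosine_sq_norm_def
    by (simp add: field_simps)
  finally show ?thesis unfolding g_def using gdist_sym[OF y z] by simp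
qed

section \<open>A tensor bound for pairs of eigenvalues\<close>

definition edge_vector :: "real \<Rightarrow> 'a \<Rightarrow> 'a \<Rightarrow> 'a \<Rightarrow> real" where
  "edge_vector \<theta> x y v = cosine \<theta> (gdist E y v) - cosine \<theta> 1 * cosine \<theta> (gdist E x v)"

definition deviation_product :: "real \<Rightarrow> real \<Rightarrow> nat \<Rightarrow> real" where
  "deviation_product \<alpha> \<rho> j = (cosine \<alpha> j - (cosine \<alpha> 1)^2) * (cosine \<rho> j - (cosine \<rho> 1)^2)"

definition tensor_bound :: "real \<Rightarrow> real \<Rightarrow> real" where
  "tensor_bound \<alpha> \<rho> = deviation_product \<alpha> \<rho> 0 + aa 1 * deviation_product \<alpha> \<rho> 1
     + bb 1 * deviation_product \<alpha> \<rho> 2"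

lemma edge_vector_inner_cosine:
  assumes root: "charpoly \<theta> = 0" and x: "x \<in> V" and y: "y \<in> V" and u: "u \<in> V"
  shows "(\<Sum>v\<in>V. edge_vector \<theta> x y v * cosine \<theta> (gdist E u v))
    = cosine_sq_norm \<theta> * (cosine \<theta> (gdist E y u) - cosine \<theta> 1 * cosine \<theta> (gdist E x u))"
proof -
  have "(\<Sum>v\<in>V. edge_vector \<theta> x y v * cosine \<theta> (gdist E u v))
      = (\<Sum>v\<in>V. cosine \<theta> (gdist E y v) * cosine \<theta> (gdist E u v))
        - cosine \<theta> 1 * (\<Sum>v\<in>V. cosine \<theta> (gdist E x v) * cosine \<theta> (gdist E u v))"
    unfolding edge_vector_def by (simp add: algebra_simps sum_subtractf sum_distrib_left)
  then show ?thesis using cosine_inner[OF root y u] cosine_inner[OF root x u] by (simp add: algebra_simps)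
qed

lemma edge_vector_inner:
  assumes root: "charpoly \<theta> = 0" and x: "x \<in> V" and y: "E x y" and z: "E x z"
  shows "(\<Sum>v\<in>V. edge_vector \<theta> x y v * edge_vector \<theta> x z v)
    = cosine_sq_norm \<theta> * (cosine \<theta> (gdist E y z) - (cosine \<theta> 1)^2)"
proof -
  have yV: "y \<in> V" and zV: "z \<in> V" using edge_in_V y z by auto
  have "(\<Sum>v\<in>V. edge_vector \<theta> x y v * edge_vector \<theta> x z v)
      = (\<Sum>v\<in>V. edge_vector \<theta> x y v * cosine \<theta> (gdist E z v))
        - cosine \<theta> 1 * (\<Sum>v\<in>V. edge_vector \<theta> x y v * cosine \<theta> (gdist E x v))"
    unfolding edge_vector_def[of \<theta> x z] by (simp add: algebra_simps sum_subtractf sum_distrib_left)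
  also have "\<dots> = cosine_sq_norm \<theta> * (cosine \<theta> (gdist E y z) - cosine \<theta> 1 * cosine \<theta> (gdist E x z))
      - cosine \<theta> 1 * (cosine_sq_norm \<theta> * (cosine \<theta> (gdist E y x) - cosine \<theta> 1 * cosine \<theta> (gdist E x x)))"
    using edge_vector_inner_cosine[OF root x yV zV] edge_vector_inner_cosine[OF root x yV x] by simp
  also have "\<dots> = cosine_sq_norm \<theta> * (cosine \<theta> (gdist E y z) - (cosine \<theta> 1)^2)"
    using gdist_edge[OF z] gdist_edge[OF edge_sym[OF y]] gdist_self[of E x]
    by (simp add: cosine_simps algebra_simps power2_eq_square)
  finally show ?thesis .
qed

lemma sum_square_edge_tensor:
  assumes ra: "charpoly \<alpha> = 0" and rr: "charpoly \<rho> = 0" and x: "x \<in> V"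
  shows "(\<Sum>v\<in>V. \<Sum>v'\<in>V. (\<Sum>y\<in>{y\<in>V. E x y}. edge_vector \<alpha> x y v * edge_vector \<rho> x y v')^2)
     = cosine_sq_norm \<alpha> * cosine_sq_norm \<rho> * kk * tensor_bound \<alpha> \<rho>"
proof -
  let ?N = "{y\<in>V. E x y}"
  let ?n = "cosine_sq_norm \<alpha> * cosine_sq_norm \<rho>"
  have "(\<Sum>v\<in>V. \<Sum>v'\<in>V. (\<Sum>y\<in>?N. edge_vector \<alpha> x y v * edge_vector \<rho> x y v')^2)
    = (\<Sum>z\<in>?N. \<Sum>y\<in>?N. (\<Sum>v\<in>V. edge_vector \<alpha> x y v * edge_vector \<alpha> x z v)
        * (\<Sum>v'\<in>V. edge_vector \<rho> x y v' * edge_vector \<rho> x z v'))"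
    by (rule sum_square_tensor)
  also have "\<dots> = (\<Sum>z\<in>?N. \<Sum>y\<in>?N. ?n * deviation_product \<alpha> \<rho> (gdist E z y))"
    using edge_vector_inner[OF ra x] edge_vector_inner[OF rr x] gdist_sym edge_in_V
    by (intro sum.cong refl) (auto simp: deviation_product_def)
  also have "\<dots> = (\<Sum>z\<in>?N. ?n * tensor_bound \<alpha> \<rho>)"
  proof (rule sum.cong[OF refl])
    fix z assume z: "z \<in> ?N"
    then have zV: "z \<in> V" and d: "gdist E z x = 1" using gdist_edge edge_sym by auto
    have "(\<Sum>y\<in>?N. deviation_product \<alpha> \<rho> (gdist E z y)) = tensor_bound \<alpha> \<rho>"
      using sum_neighbours[OF zV x] d intersection_numbers_real unfolding tensor_bound_def by (simp add: eval_nat_numeral)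
    then show "(\<Sum>y\<in>?N. ?n * deviation_product \<alpha> \<rho> (gdist E z y)) = ?n * tensor_bound \<alpha> \<rho>"
      by (simp add: sum_distrib_left[symmetric])
  qed
  also have "\<dots> = ?n * kk * tensor_bound \<alpha> \<rho>"
    using degree[OF x] by simp
  finally show ?thesis .
qed

lemma tensor_bound_nonneg:
  assumes "charpoly \<alpha> = 0" "charpoly \<rho> = 0"
  shows "tensor_bound \<alpha> \<rho> \<ge> 0"
proof -
  obtain x where x: "x \<in> V" using V_nonempty by blast
  have "0 \<le> cosine_sq_norm \<alpha> * cosine_sq_norm \<rho> * kk * tensor_bound \<alpha> \<rho>"
    unfolding sum_square_edge_tensor[OF assms x, symmetric] by (intro sum_nonneg) auto
  moreover have "cosine_sq_norm \<alpha> * cosine_sq_norm \<rho> * kk > 0"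
    using cosine_sq_norm_pos intersection_numbers_real by simp
  ultimately show ?thesis by (simp add: zero_le_mult_iff)
qed

lemma tensor_bound_eq_0_imp_local:
  assumes ra: "charpoly \<alpha> = 0" and rr: "charpoly \<rho> = 0" and tight: "tensor_bound \<alpha> \<rho> = 0"
    and x: "x \<in> V" and u: "u \<in> V"
  defines "i \<equiv> gdist E u x"
  defines "h \<equiv> \<lambda>j. (cosine \<alpha> j - cosine \<alpha> 1 * cosine \<alpha> i) * (cosine \<rho> j - cosine \<rho> 1 * cosine \<rho> i)"
  shows "cc i * h (i - 1) + aa i * h i + bb i * h (i + 1) = 0"
proof -
  let ?N = "{y\<in>V. E x y}"
  let ?M = "\<lambda>v v'. \<Sum>y\<in>?N. edge_vector \<alpha> x y v * edge_vector \<rho> x y v'"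
  have inner: "(\<Sum>v\<in>V. edge_vector \<theta> x y v * cosine \<theta> (gdist E u v))
      = cosine_sq_norm \<theta> * (cosine \<theta> (gdist E u y) - cosine \<theta> 1 * cosine \<theta> i)"
    if "charpoly \<theta> = 0" "y \<in> V" for \<theta> y
    using edge_vector_inner_cosine[OF that(1) x that(2) u] gdist_sym[OF that(2) u] gdist_sym[OF x u]
    unfolding i_def by simp
  have "(\<Sum>v\<in>V. \<Sum>v'\<in>V. (?M v v')^2) = 0"
    using sum_square_edge_tensor[OF ra rr x] tight by simp
  then have M0: "?M v v' = 0" if "v \<in> V" "v' \<in> V" for v v'
    using that finite_V by (simp add: sum_nonneg sum_nonneg_eq_0_iff)
  have "0 = (\<Sum>v\<in>V. \<Sum>v'\<in>V. ?M v v' * (cosine \<alpha> (gdist E u v) * cosine \<rho> (gdist E u v')))"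
    using M0 by simp
  also have "\<dots> = (\<Sum>y\<in>?N. (\<Sum>v\<in>V. edge_vector \<alpha> x y v * cosine \<alpha> (gdist E u v))
      * (\<Sum>v'\<in>V. edge_vector \<rho> x y v' * cosine \<rho> (gdist E u v')))"
    by (rule sum_product_bilinear)
  also have "\<dots> = (\<Sum>y\<in>?N. cosine_sq_norm \<alpha> * cosine_sq_norm \<rho> * h (gdist E u y))"
    by (intro sum.cong refl) (simp add: inner ra rr h_def)
  also have "\<dots> = cosine_sq_norm \<alpha> * cosine_sq_norm \<rho> * (\<Sum>y\<in>?N. h (gdist E u y))"
    by (simp add: sum_distrib_left)
  also have "(\<Sum>y\<in>?N. h (gdist E u y)) = cc i * h (i - 1) + aa i * h i + bb i * h (i + 1)"
    unfolding i_def by (rule sum_neighbours[OF u x])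
  finally show ?thesis using cosine_sq_norm_pos[of \<alpha>] cosine_sq_norm_pos[of \<rho>] by simp
qed

end

section \<open>Shilla graphs\<close>

locale shilla_graph = distance_regular_3 +
  assumes second_largest_eq_a3: "second_largest_eigenvalue V E = aa 3"
begin

definition \<beta> :: real where "\<beta> = aa 3 - aa 1"

lemma charpoly_a3: "charpoly (aa 3) = 0"
  using second_largest_eigenvalue_root second_largest_eq_a3 by simp

lemma charpoly2_a3: "charpoly2 (aa 3) = 0"
  using charpoly_a3 intersection_numbers_real unfolding charpoly_def by simp

lemma valency_eq: "kk = \<beta> * aa 3"
  using charpoly2_a3 unfolding charpoly2_def \<beta>_def by (simp add: algebra_simps)

lemma a3_pos: "aa 3 > 0"
proof -
  have "aa 3 \<noteq> 0" using valency_eq intersection_numbers_real(1) by auto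
  then show ?thesis using intersection_numbers(9) by simp
qed

lemma b1_eq: "bb 1 = (\<beta> - 1) * (aa 3 + 1)"
  using aa_eq_123(1) valency_eq unfolding \<beta>_def by (simp add: algebra_simps)

lemma beta_gt_1: "\<beta> > 1"
proof (rule ccontr)
  assume "\<not> \<beta> > 1"
  then have "(\<beta> - 1) * (aa 3 + 1) \<le> 0" using a3_pos by (intro mult_nonpos_nonneg) auto
  then show False using b1_eq intersection_numbers_real(2) by simp
qed

text \<open>Oriented as rewrite rules, these express every intersection number in terms of the
  independent parameters a_3, \<beta>, b_2 and c_2.\<close>

lemma shilla_eqs: "kk = \<beta> * aa 3" "aa 1 = aa 3 - \<beta>" "bb 1 = (\<beta> - 1) * (aa 3 + 1)"
  "aa 2 = \<beta> * aa 3 - bb 2 - cc 2" "cc 3 = \<beta> * aa 3 - aa 3"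
  using valency_eq b1_eq aa_eq_123(2,3) unfolding \<beta>_def by auto

definition shilla_quadratic :: "real \<Rightarrow> real" where
  "shilla_quadratic t = t^2 + (kk + \<beta> - aa 2 - aa 3) * t + ((\<beta> - 1) * bb 2 - aa 2)"

lemma charpoly_shilla: "charpoly t = (t - kk) * (t - aa 3) * shilla_quadratic t"
  unfolding charpoly_def charpoly3_def charpoly2_def shilla_quadratic_def shilla_eqs
  by (simp add: algebra_simps power2_eq_square)

lemma shilla_quadratic_neg: "shilla_quadratic (- \<beta>) < 0"
proof (rule ccontr)
  assume "\<not> shilla_quadratic (- \<beta>) < 0"
  moreover have "- \<beta> - kk < 0" using beta_gt_1 intersection_numbers_real by simp
  ultimately have "(- \<beta> - kk) * shilla_quadratic (- \<beta>) \<le> 0" by (intro mult_nonpos_nonneg) auto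
  moreover have "(- \<beta> - kk) * shilla_quadratic (- \<beta>) = \<beta> * bb 1 * cc 2"
    unfolding shilla_quadratic_def shilla_eqs by (simp add: algebra_simps power2_eq_square)
  moreover have "\<beta> * bb 1 * cc 2 > 0" using beta_gt_1 intersection_numbers_real by simp
  ultimately show False by simp
qed

lemma shilla_quadratic_roots:
  obtains r r' where "r < - \<beta>" "- \<beta> < r'" "\<And>t. shilla_quadratic t = (t - r) * (t - r')"
proof -
  define \<sigma> where "\<sigma> = kk + \<beta> - aa 2 - aa 3"
  define \<pi> where "\<pi> = (\<beta> - 1) * bb 2 - aa 2"
  define D where "D = \<sigma>^2 - 4 * \<pi>"
  have q: "shilla_quadratic t = (t + \<sigma> / 2)^2 - D / 4" for t
    unfolding shilla_quadratic_def \<sigma>_def \<pi>_def D_def by (simp add: power2_eq_square field_simps)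
  have "(- \<beta> + \<sigma> / 2)^2 \<ge> 0" by simp
  then have D: "D > 0" using q[of "- \<beta>"] shilla_quadratic_neg by linarith
  define r where "r = (- \<sigma> - sqrt D) / 2"
  define r' where "r' = (- \<sigma> + sqrt D) / 2"
  have factor: "shilla_quadratic t = (t - r) * (t - r')" for t
  proof -
    have "(t - r) * (t - r') = (t + \<sigma> / 2)^2 - (sqrt D)^2 / 4"
      unfolding r_def r'_def by (simp add: power2_eq_square field_simps)
    then show ?thesis using q D by simp
  qed
  have "r \<le> r'" unfolding r_def r'_def using D by simp
  have neg: "(- \<beta> - r) * (- \<beta> - r') < 0" using shilla_quadratic_neg factor by simp
  have "r < - \<beta>"
  proof (rule ccontr)
    assume "\<not> r < - \<beta>"
    then have "(- \<beta> - r) * (- \<beta> - r') \<ge> 0" using \<open>r \<le> r'\<close> by (intro mult_nonpos_nonpos) auto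
    then show False using neg by simp
  qed
  moreover have "- \<beta> < r'"
  proof (rule ccontr)
    assume "\<not> - \<beta> < r'"
    then have "(- \<beta> - r) * (- \<beta> - r') \<ge> 0" using \<open>r \<le> r'\<close> by (intro mult_nonneg_nonneg) auto
    then show False using neg by simp
  qed
  ultimately show ?thesis using factor that by blast
qed

lemma smallest_eigenvalue_less_neg_beta:
  obtains \<rho> where "smallest_eigenvalue V E = \<rho>" "charpoly \<rho> = 0" "\<rho> < - \<beta>"
proof -
  obtain r r' where r: "r < - \<beta>" "- \<beta> < r'" "\<And>t. shilla_quadratic t = (t - r) * (t - r')"
    using shilla_quadratic_roots by blast
  have root: "charpoly r = 0" unfolding charpoly_shilla r(3) by simp
  have "Min (adj_eigenvalues V E) = r"
  proof (rule Min_eqI[OF finite_eigenvalues])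
    show "r \<in> adj_eigenvalues V E"
      using charpoly_root_imp_eigenvalue[OF root] unfolding adj_eigenvalues_def by simp
    fix t assume "t \<in> adj_eigenvalues V E"
    then have "charpoly t = 0" using eigenvalue_imp_charpoly_root unfolding adj_eigenvalues_def by simp
    then have "t = kk \<or> t = aa 3 \<or> t = r \<or> t = r'" unfolding charpoly_shilla r(3) by simp
    then show "r \<le> t" using r beta_gt_1 a3_pos intersection_numbers_real(1) by auto
  qed
  then show ?thesis using that root r(1) unfolding smallest_eigenvalue_def by blast
qed

lemma cosine_a3: "cosine (aa 3) 1 = 1 / \<beta>" "cosine (aa 3) 2 = 0"
    "bb 2 * cosine (aa 3) 3 = - cc 2 / \<beta>"
proof -
  show "cosine (aa 3) 1 = 1 / \<beta>"
    unfolding cosine_simps valency_eq using a3_pos by simp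
  show "cosine (aa 3) 2 = 0"
    unfolding cosine_simps charpoly2_a3 by simp
  show "bb 2 * cosine (aa 3) 3 = - cc 2 / \<beta>"
    unfolding cosine_simps charpoly3_def charpoly2_a3 valency_eq
    using a3_pos beta_gt_1 intersection_numbers_real by (simp add: field_simps)
qed

lemma tensor_bound_a3:
  "\<beta>^2 * kk^2 * tensor_bound (aa 3) \<rho> = \<beta> * aa 3 * (\<rho> + \<beta>^2) * (kk - \<rho>)"
proof -
  have nz: "\<beta> \<noteq> 0" "kk \<noteq> 0" "bb 1 \<noteq> 0" using beta_gt_1 intersection_numbers_real by auto
  have "\<beta>^2 * kk^2 * tensor_bound (aa 3) \<rho> = \<beta>^2 * kk^2 * ((1 - 1 / \<beta>^2) * (1 - (\<rho> / kk)^2)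
      + aa 1 * (1 / \<beta> - 1 / \<beta>^2) * (\<rho> / kk - (\<rho> / kk)^2)
      - bb 1 / \<beta>^2 * (charpoly2 \<rho> / (kk * bb 1) - (\<rho> / kk)^2))"
    unfolding tensor_bound_def deviation_product_def cosine_a3(1,2)
    by (simp add: cosine_simps power_divide)
  also have "\<dots> = (\<beta>^2 - 1) * (kk^2 - \<rho>^2)
      + aa 1 * (\<beta> - 1) * (\<rho> * kk - \<rho>^2) - kk * charpoly2 \<rho> + bb 1 * \<rho>^2"
    using nz by (simp add: field_simps power2_eq_square)
  also have "\<dots> = \<beta> * aa 3 * (\<rho> + \<beta>^2) * (kk - \<rho>)"
    unfolding charpoly2_def shilla_eqs by (simp add: algebra_simps power2_eq_square)
  finally show ?thesis .
qed

lemma charpoly_root_ge_neg_beta_sq: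
  assumes root: "charpoly \<rho> = 0"
  shows "- (\<beta>^2) \<le> \<rho>"
proof (cases "\<rho> = kk")
  case True
  then show ?thesis using intersection_numbers_real(1) by (smt (verit) zero_le_power2)
next
  case False
  moreover have "\<rho> \<le> kk" using eigenvalue_le_valency[OF charpoly_root_imp_eigenvalue[OF root]] .
  ultimately have "kk - \<rho> > 0" by simp
  moreover have "\<beta> * aa 3 > 0" using beta_gt_1 a3_pos by simp
  moreover have "0 \<le> \<beta> * aa 3 * (\<rho> + \<beta>^2) * (kk - \<rho>)"
    unfolding tensor_bound_a3[symmetric]
    using tensor_bound_nonneg[OF charpoly_a3 root] by simp
  ultimately show ?thesis by (simp add: zero_le_mult_iff)
qed

lemma tensor_bound_eq_0_cosines_eq:
  assumes root: "charpoly \<rho> = 0" and tight: "tensor_bound (aa 3) \<rho> = 0"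
  shows "cosine \<rho> 1 = cosine \<rho> 3" "cosine \<rho> 2 = cosine \<rho> 3"
proof -
  obtain x u2 u3 where geo: "x \<in> V" "u2 \<in> V" "u3 \<in> V"
    "gdist E u2 x = 2" "gdist E u3 x = 3"
    using geodesic_3 gdist_sym by metis
  note local = tensor_bound_eq_0_imp_local[OF charpoly_a3 root tight geo(1)]
  define W where "W = cosine (aa 3) 3"
  define p1 p2 p3 where "p1 = cosine \<rho> 1" and "p2 = cosine \<rho> 2" and "p3 = cosine \<rho> 3"
  have "W \<noteq> 0" using cosine_a3(3) beta_gt_1 intersection_numbers_real unfolding W_def by auto
  have "0 = cc 3 * ((0 - W / \<beta>) * (p2 - p1 * p3)) + aa 3 * ((W - W / \<beta>) * (p3 - p1 * p3))"
    using local[OF geo(3)] geo(5) intersection_numbers_real cosine_a3(1,2)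
    unfolding W_def p1_def p2_def p3_def by (simp add: eval_nat_numeral)
  also have "\<dots> = aa 3 * W * (\<beta> - 1) / \<beta> * (p3 - p2)"
    unfolding shilla_eqs using beta_gt_1 by (simp add: field_simps)
  finally show "cosine \<rho> 2 = cosine \<rho> 3"
    using \<open>W \<noteq> 0\<close> a3_pos beta_gt_1 unfolding p2_def p3_def by simp
  have "0 = cc 2 * (1 / \<beta> * (p1 - p1 * p2)) + bb 2 * W * (p3 - p1 * p2)"
    using local[OF geo(2)] geo(4) cosine_a3(1,2)
    unfolding W_def p1_def p2_def p3_def by (simp add: eval_nat_numeral)
  also have "\<dots> = cc 2 * (1 / \<beta> * (p1 - p1 * p2)) - cc 2 / \<beta> * (p3 - p1 * p2)"
    using cosine_a3(3) unfolding W_def by simp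
  also have "\<dots> = cc 2 / \<beta> * (p1 - p3)"
    by (simp add: algebra_simps diff_divide_distrib)
  finally show "cosine \<rho> 1 = cosine \<rho> 3"
    using beta_gt_1 intersection_numbers_real unfolding p1_def p3_def by simp
qed

lemma charpoly_root_ne_neg_beta_sq: "charpoly \<rho> = 0 \<Longrightarrow> \<rho> \<noteq> - (\<beta>^2)"
proof
  assume root: "charpoly \<rho> = 0" and \<rho>: "\<rho> = - (\<beta>^2)"
  have "tensor_bound (aa 3) \<rho> = 0"
    using tensor_bound_a3[of \<rho>] \<rho> beta_gt_1 intersection_numbers_real by simp
  note eq = tensor_bound_eq_0_cosines_eq[OF root this]
  have "cc 3 * cosine \<rho> 2 + aa 3 * cosine \<rho> 3 = \<rho> * cosine \<rho> 3"
    using cosine_recurrence[OF root, of 3] intersection_numbers_real by simp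
  then have "(kk - \<rho>) * cosine \<rho> 3 = 0"
    using eq(2) aa_eq_123(3) by (simp add: algebra_simps)
  moreover have "kk - \<rho> > 0" using \<rho> intersection_numbers_real by (smt (verit) zero_le_power2)
  ultimately have "\<rho> / kk = 0" using eq(1) by (simp add: cosine_simps)
  then show False using \<rho> beta_gt_1 intersection_numbers_real by simp
qed

end

theorem corollary16:
  fixes V :: "'a set" and E :: "'a \<Rightarrow> 'a \<Rightarrow> bool" and b c :: "nat \<Rightarrow> nat"
  assumes "shilla V E b c"
  shows "- ((real_of_int (intersection_a b c 3 - intersection_a b c 1))^2) < smallest_eigenvalue V E
       \<and> smallest_eigenvalue V E < - real_of_int (intersection_a b c 3 - intersection_a b c 1)"
proof -
  interpret shilla_graph V E b c
    using assms unfolding shilla_def by unfold_locales auto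
  obtain \<rho> where \<rho>: "smallest_eigenvalue V E = \<rho>" "charpoly \<rho> = 0" "\<rho> < - \<beta>"
    by (rule smallest_eigenvalue_less_neg_beta)
  have "- (\<beta>^2) < \<rho>" using charpoly_root_ge_neg_beta_sq[OF \<rho>(2)] charpoly_root_ne_neg_beta_sq[OF \<rho>(2)] by simp
  then show ?thesis using \<rho>(1,3) unfolding \<beta>_def by simp
qed

end
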